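(* Let $i\in\{0,\dots,N\}$, $V_i=\mathrm{span}(v_1,\dots,v_i)$, and let $x=w+z$ with $w\in V_i$, $z\in V_i^\perp$, $z\neq 0$, and $|v_j\cdot z|<\kappa\|z\|$ for every $j>i$. Then \[ \mathcal W(x)=\sup_{a,b\ge 0:\ a^2+b^2\in[\delta^2,1]}\left\{-2\alpha(a^2+b^2)^{\frac{1+\alpha}{2}} + \frac{2(1+\alpha)}{(a^2+b^2)^{\frac{1-\alpha}{2}}}\Big(\sup_{y\in \tilde\Omega_{a,b}} y\cdot w + b\|z\|\Big)\right\}, \] where $\tilde\Omega_{a,b}=\{y\in V_i: \|y\|=a,\ |v_j\cdot y|<\kappa\sqrt{a^2+b^2}\ \text{for all } j\in[i]\}$, with the convention that the supremum of an empty set is $-\infty$. In particular, this value does not depend on $v_{i+1},\dots,v_N$.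
   Context: Let $v_1,\dots,v_N$ be an orthonormal family in $\mathbb{R}^d$. Let $\kappa>0$, $\delta\in(0,1)$, $\alpha>0$. Correlation cones: $C_i=\{x\ne 0: |v_i\cdot x|/\|x\|\ge \kappa\}$. Let $h(x)=2\|x\|^{1+\alpha}$, $\Omega=\{x\in\mathbb{R}^d: \|x\|\in[\delta,1],\ x\notin C_i \text{ for all } i\in[N]\}$, and wall function $\mathcal W(x)=\sup_{y\in\Omega}\{h(y)+\nabla h(y)\cdot(x-y)\}$. *)

theory Defs
  imports "HOL-Analysis.Analysis"
begin

definition grad :: "('a::euclidean_space \<Rightarrow> real) \<Rightarrow> 'a \<Rightarrow> 'a" where
  "grad f y = (THE D. GDERIV f y :> D)"

definition orthonormal_family :: "(nat \<Rightarrow> 'a::euclidean_space) \<Rightarrow> nat \<Rightarrow> bool" where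
  "orthonormal_family v N \<longleftrightarrow>
     (\<forall>i\<in>{1..N}. \<forall>j\<in>{1..N}. v i \<bullet> v j = (if i = j then 1 else 0))"

definition corr_cone :: "real \<Rightarrow> 'a::euclidean_space \<Rightarrow> 'a set" where
  "corr_cone \<kappa> u = {x. x \<noteq> 0 \<and> \<bar>u \<bullet> x\<bar> / norm x \<ge> \<kappa>}"

definition hfun :: "real \<Rightarrow> 'a::euclidean_space \<Rightarrow> real" where
  "hfun \<alpha> x = 2 * norm x powr (1 + \<alpha>)"

definition Omega :: "(nat \<Rightarrow> 'a::euclidean_space) \<Rightarrow> nat \<Rightarrow> real \<Rightarrow> real \<Rightarrow> 'a set" where
  "Omega v N \<kappa> \<delta> = {x. norm x \<in> {\<delta>..1} \<and> (\<forall>i\<in>{1..N}. x \<notin> corr_cone \<kappa> (v i))}"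

text \<open>Wall function, as an extended real (sup of the empty set is -infinity).\<close>
definition wall :: "(nat \<Rightarrow> 'a::euclidean_space) \<Rightarrow> nat \<Rightarrow> real \<Rightarrow> real \<Rightarrow> real \<Rightarrow> 'a \<Rightarrow> ereal" where
  "wall v N \<kappa> \<delta> \<alpha> x =
     (SUP y\<in>Omega v N \<kappa> \<delta>. ereal (hfun \<alpha> y + grad (hfun \<alpha>) y \<bullet> (x - y)))"

definition Omega_tilde :: "(nat \<Rightarrow> 'a::euclidean_space) \<Rightarrow> nat \<Rightarrow> real \<Rightarrow> real \<Rightarrow> real \<Rightarrow> 'a set" where
  "Omega_tilde v i \<kappa> a b = {y. y \<in> span (v ` {1..i}) \<and> norm y = a \<and>
       (\<forall>j\<in>{1..i}. \<bar>v j \<bullet> y\<bar> < \<kappa> * sqrt (a\<^sup>2 + b\<^sup>2))}"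

end

theory Submission
  imports Defs
begin

text \<open>The tangent plane of \<open>h\<close> at \<open>y \<noteq> 0\<close>, evaluated at \<open>x\<close>, equals
  \<open>-2\<alpha>\<parallel>y\<parallel>\<^bsup>1+\<alpha>\<^esup> + 2(1+\<alpha>)\<parallel>y\<parallel>\<^bsup>\<alpha>-1\<^esup> (y \<bullet> x)\<close>, so it depends on \<open>y\<close> only through
  \<open>\<parallel>y\<parallel>\<close> and \<open>y \<bullet> x\<close>, with a positive slope. Splitting \<open>y = y\<^sub>1 + y\<^sub>2\<close> along
  \<open>V\<^sub>i \<oplus> V\<^sub>i\<^sup>\<bottom>\<close> with \<open>a = \<parallel>y\<^sub>1\<parallel>\<close>, \<open>b = \<parallel>y\<^sub>2\<parallel>\<close>, the cone constraints for \<open>j \<le> i\<close> see only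
  \<open>y\<^sub>1\<close>, so \<open>y\<^sub>1 \<in> \<Omega>\<^sub>a\<^sub>,\<^sub>b\<close>, and Cauchy-Schwarz gives \<open>y \<bullet> x \<le> y\<^sub>1 \<bullet> w + b\<parallel>z\<parallel>\<close>.
  Conversely \<open>y\<^sub>1 + (b/\<parallel>z\<parallel>) z\<close> attains this bound and lies in \<open>\<Omega>\<close>: the hypothesis on \<open>z\<close>
  keeps it outside the cones \<open>C\<^sub>j\<close> for \<open>j > i\<close>. The inner supremum then passes through
  the increasing affine map.\<close>

lemma SUP_eq_SUP_SUP:
  fixes f :: "'a \<Rightarrow> 'c::complete_lattice"
  assumes "\<And>x. x \<in> A \<Longrightarrow> \<exists>i\<in>I. \<exists>j\<in>B i. f x \<le> g i j"
    and "\<And>i j. i \<in> I \<Longrightarrow> j \<in> B i \<Longrightarrow> \<exists>x\<in>A. g i j \<le> f x"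
  shows "(SUP x\<in>A. f x) = (SUP i\<in>I. SUP j\<in>B i. g i j)"
  by (intro order.antisym SUP_least) (blast intro: SUP_upper2 dest: assms)+

lemma grad_eqI:
  assumes "GDERIV f y :> D"
  shows "grad f y = D"
  unfolding grad_def
proof (rule the_equality)
  show "GDERIV f y :> D" by (rule assms)
next
  fix D' assume "GDERIV f y :> D'"
  then have "(\<lambda>h. h \<bullet> D') = (\<lambda>h. h \<bullet> D)"
    using assms unfolding gderiv_def by (rule has_derivative_unique)
  then have "(D' - D) \<bullet> (D' - D) = 0"
    by (metis inner_diff_right right_minus_eq)
  then show "D' = D" by simp
qed

lemma grad_hfun:
  fixes y :: "'a::euclidean_space"
  assumes "y \<noteq> 0"
  shows "grad (hfun \<alpha>) y = (2 * (1 + \<alpha>) * norm y powr \<alpha>) *\<^sub>R sgn y"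
proof (rule grad_eqI)
  have "((\<lambda>t. 2 * t powr (1 + \<alpha>)) has_real_derivative 2 * (1 + \<alpha>) * norm y powr \<alpha>)
      (at (norm y))"
    using assms by (auto intro!: derivative_eq_intros)
  from GDERIV_DERIV_compose[OF GDERIV_norm[OF assms] this]
  show "GDERIV (hfun \<alpha>) y :> (2 * (1 + \<alpha>) * norm y powr \<alpha>) *\<^sub>R sgn y"
    by (simp only: hfun_def[abs_def])
qed

definition tangent_offset :: "real \<Rightarrow> real \<Rightarrow> real" where
  "tangent_offset \<alpha> s = - 2 * \<alpha> * s powr ((1 + \<alpha>) / 2)"

definition tangent_slope :: "real \<Rightarrow> real \<Rightarrow> real" where
  "tangent_slope \<alpha> s = 2 * (1 + \<alpha>) / s powr ((1 - \<alpha>) / 2)"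

lemma tangent_slope_pos: "\<alpha> > -1 \<Longrightarrow> s > 0 \<Longrightarrow> tangent_slope \<alpha> s > 0"
  unfolding tangent_slope_def by simp

lemma hfun_tangent:
  fixes x y :: "'a::euclidean_space"
  assumes "y \<noteq> 0"
  shows "hfun \<alpha> y + grad (hfun \<alpha>) y \<bullet> (x - y) =
    tangent_offset \<alpha> ((norm y)\<^sup>2) + tangent_slope \<alpha> ((norm y)\<^sup>2) * (y \<bullet> x)"
proof -
  define r where "r = norm y"
  have r: "r > 0" using assms by (simp add: r_def)
  have sq: "(r\<^sup>2) powr (e / 2) = r powr e" for e
    using r by (simp add: powr_powr flip: powr_numeral)
  have yy: "y \<bullet> y = r\<^sup>2" by (simp add: r_def power2_norm_eq_inner)
  show ?thesis
    unfolding hfun_def grad_hfun[OF assms] tangent_offset_def tangent_slope_def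
      r_def[symmetric] sq sgn_div_norm
    using r by (simp add: inner_diff_right yy powr_add powr_diff field_simps power2_eq_square)
qed

lemma SUP_ereal_affine:
  assumes "c > 0"
  shows "ereal A + ereal c * ((SUP y\<in>Y. ereal (g y)) + ereal \<beta>) =
    (SUP y\<in>Y. ereal (A + c * (g y + \<beta>)))"
proof (cases "Y = {}")
  case True
  then show ?thesis using assms by (simp add: bot_ereal_def)
next
  case False
  have "ereal A + ereal c * ((SUP y\<in>Y. ereal (g y)) + ereal \<beta>) =
      ereal A + ereal c * (SUP y\<in>Y. ereal (g y) + ereal \<beta>)"
    by (simp add: SUP_ereal_add_left[OF False] del: plus_ereal.simps)
  also have "\<dots> = (SUP y\<in>Y. ereal A + ereal c * (ereal (g y) + ereal \<beta>))"
    using False assms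
    by (simp add: Sup_ereal_mult_left' SUP_ereal_add_right image_image del: plus_ereal.simps)
  finally show ?thesis by simp
qed

lemma orthonormal_family_inner_span:
  assumes "orthonormal_family v N" "i < j" "j \<le> N" "u \<in> span (v ` {1..i})"
  shows "v j \<bullet> u = 0"
proof -
  have "orthogonal (v j) u"
  proof (rule orthogonal_to_span[OF assms(4)])
    fix y assume "y \<in> v ` {1..i}"
    with assms(1-3) show "orthogonal (v j) y"
      unfolding orthonormal_family_def orthogonal_def by auto
  qed
  then show ?thesis by (simp add: orthogonal_def)
qed

lemma notin_corr_cone_iff:
  "x \<noteq> 0 \<Longrightarrow> x \<notin> corr_cone \<kappa> u \<longleftrightarrow> \<bar>u \<bullet> x\<bar> < \<kappa> * norm x"
  unfolding corr_cone_def by (auto simp: not_le pos_divide_less_eq pos_le_divide_eq mult.commute)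

lemma Omega_ne_zero: "\<delta> > 0 \<Longrightarrow> y \<in> Omega v N \<kappa> \<delta> \<Longrightarrow> y \<noteq> 0"
  unfolding Omega_def by auto

lemma Omega_orthogonal_decomposition:
  assumes "i \<le> N" "\<delta> > 0" "y \<in> Omega v N \<kappa> \<delta>"
  obtains y1 y2 where "y = y1 + y2" "\<And>u. u \<in> span (v ` {1..i}) \<Longrightarrow> orthogonal y2 u"
    "y1 \<in> Omega_tilde v i \<kappa> (norm y1) (norm y2)"
    "(norm y)\<^sup>2 = (norm y1)\<^sup>2 + (norm y2)\<^sup>2" "(norm y1)\<^sup>2 + (norm y2)\<^sup>2 \<in> {\<delta>\<^sup>2..1}"
proof -
  obtain y1 y2 where y1: "y1 \<in> span (v ` {1..i})"
      and y2: "\<And>u. u \<in> span (v ` {1..i}) \<Longrightarrow> orthogonal y2 u" and y: "y = y1 + y2"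
    using orthogonal_subspace_decomp_exists[of "v ` {1..i}" y] by metis
  have pyth: "(norm y)\<^sup>2 = (norm y1)\<^sup>2 + (norm y2)\<^sup>2"
    unfolding y using y2[OF y1] by (simp add: norm_add_Pythagorean orthogonal_commute)
  have ny: "norm y \<in> {\<delta>..1}" and cones: "\<forall>j\<in>{1..N}. y \<notin> corr_cone \<kappa> (v j)"
    using assms(3) unfolding Omega_def by auto
  have y_ne_0: "y \<noteq> 0" using ny assms(2) by auto
  have "y1 \<in> Omega_tilde v i \<kappa> (norm y1) (norm y2)"
    unfolding Omega_tilde_def
  proof (intro CollectI conjI ballI refl y1)
    fix j assume j: "j \<in> {1..i}"
    have "v j \<bullet> y1 = v j \<bullet> y"
      using y2[of "v j"] j by (auto simp: y inner_add_right orthogonal_def inner_commute span_base)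
    also have "\<bar>\<dots>\<bar> < \<kappa> * norm y"
      using cones j assms(1) notin_corr_cone_iff[OF y_ne_0] by auto
    finally show "\<bar>v j \<bullet> y1\<bar> < \<kappa> * sqrt ((norm y1)\<^sup>2 + (norm y2)\<^sup>2)"
      by (simp flip: pyth)
  qed
  moreover have "(norm y1)\<^sup>2 + (norm y2)\<^sup>2 \<in> {\<delta>\<^sup>2..1}"
    using ny assms(2) by (auto simp flip: pyth intro: power_mono power_le_one)
  ultimately show thesis using that y y2 pyth by blast
qed

lemma abs_inner_add_scaled_less:
  fixes y1 z u :: "'a::real_inner" and b \<kappa> :: real
  defines "y \<equiv> y1 + (b / norm z) *\<^sub>R z"
  assumes u_y1: "u \<bullet> y1 = 0" and u_z: "\<bar>u \<bullet> z\<bar> < \<kappa> * norm z"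
    and "0 \<le> b" "b \<le> norm y" "y \<noteq> 0"
  shows "\<bar>u \<bullet> y\<bar> < \<kappa> * norm y"
proof -
  have "0 < \<kappa> * norm z" using u_z abs_ge_zero[of "u \<bullet> z"] by linarith
  then have "z \<noteq> 0" "\<kappa> > 0" by (auto simp: zero_less_mult_iff)
  have uy: "\<bar>u \<bullet> y\<bar> = (b / norm z) * \<bar>u \<bullet> z\<bar>"
    using u_y1 \<open>0 \<le> b\<close> by (simp add: y_def inner_add_right abs_mult)
  show ?thesis
  proof (cases "b = 0")
    case True
    then show ?thesis using uy \<open>y \<noteq> 0\<close> \<open>\<kappa> > 0\<close> by simp
  next
    case False
    have "(b / norm z) * \<bar>u \<bullet> z\<bar> < (b / norm z) * (\<kappa> * norm z)"
      using u_z by (rule mult_strict_left_mono) (use \<open>0 \<le> b\<close> False \<open>z \<noteq> 0\<close> in simp)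
    also have "\<dots> = \<kappa> * b" using \<open>z \<noteq> 0\<close> by simp
    also have "\<dots> \<le> \<kappa> * norm y" using \<open>\<kappa> > 0\<close> \<open>b \<le> norm y\<close> by simp
    finally show ?thesis using uy by simp
  qed
qed

lemma Omega_tilde_lift:
  assumes "orthonormal_family v N" "\<kappa> > 0" "\<delta> > 0" "b \<ge> 0"
    and ab: "a\<^sup>2 + b\<^sup>2 \<in> {\<delta>\<^sup>2..1}" and y1: "y1 \<in> Omega_tilde v i \<kappa> a b"
    and w: "w \<in> span (v ` {1..i})"
    and z_orth: "\<And>u. u \<in> span (v ` {1..i}) \<Longrightarrow> z \<bullet> u = 0" and "z \<noteq> 0"
    and z_cones: "\<And>j. j \<in> {i<..N} \<Longrightarrow> \<bar>v j \<bullet> z\<bar> < \<kappa> * norm z"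
  defines "y \<equiv> y1 + (b / norm z) *\<^sub>R z"
  shows "y \<in> Omega v N \<kappa> \<delta>" and "(norm y)\<^sup>2 = a\<^sup>2 + b\<^sup>2"
    and "y \<bullet> (w + z) = y1 \<bullet> w + b * norm z"
proof -
  have y1_span: "y1 \<in> span (v ` {1..i})" and "norm y1 = a"
    and y1_cones: "\<forall>j\<in>{1..i}. \<bar>v j \<bullet> y1\<bar> < \<kappa> * sqrt (a\<^sup>2 + b\<^sup>2)"
    using y1 unfolding Omega_tilde_def by auto
  have "orthogonal y1 ((b / norm z) *\<^sub>R z)"
    using z_orth[OF y1_span] by (simp add: orthogonal_def inner_commute)
  then show pyth: "(norm y)\<^sup>2 = a\<^sup>2 + b\<^sup>2"
    unfolding y_def using \<open>z \<noteq> 0\<close> \<open>b \<ge> 0\<close> \<open>norm y1 = a\<close> by (simp add: norm_add_Pythagorean)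
  then have ny: "norm y = sqrt (a\<^sup>2 + b\<^sup>2)" by (simp add: real_sqrt_unique)
  have y_ne_0: "y \<noteq> 0" using ny ab \<open>\<delta> > 0\<close> by (auto intro: less_le_trans[of 0 "\<delta>\<^sup>2"])
  have "\<bar>v j \<bullet> y\<bar> < \<kappa> * norm y" if j: "j \<in> {1..N}" for j
  proof (cases "j \<le> i")
    case True
    then have "v j \<bullet> z = 0" using j z_orth[of "v j"] by (simp add: span_base inner_commute)
    then have "v j \<bullet> y = v j \<bullet> y1" by (simp add: y_def inner_add_right)
    then show ?thesis using y1_cones True j by (simp add: ny)
  next
    case False
    then have "v j \<bullet> y1 = 0" "\<bar>v j \<bullet> z\<bar> < \<kappa> * norm z"
      using j orthonormal_family_inner_span[OF assms(1) _ _ y1_span] z_cones by auto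
    moreover have "b \<le> norm y" using \<open>b \<ge> 0\<close> by (simp add: ny real_le_rsqrt)
    ultimately show ?thesis
      using abs_inner_add_scaled_less \<open>b \<ge> 0\<close> y_ne_0 unfolding y_def by blast
  qed
  moreover have "norm y \<in> {\<delta>..1}"
    using ab \<open>\<delta> > 0\<close> by (auto simp: ny real_le_rsqrt real_sqrt_le_iff intro: real_le_lsqrt)
  ultimately show "y \<in> Omega v N \<kappa> \<delta>"
    unfolding Omega_def using notin_corr_cone_iff[OF y_ne_0] by auto
  have "y1 \<bullet> z = 0" "z \<bullet> w = 0"
    using z_orth[OF y1_span] z_orth[OF w] by (simp_all add: inner_commute)
  then show "y \<bullet> (w + z) = y1 \<bullet> w + b * norm z"
    using \<open>z \<noteq> 0\<close> by (simp add: y_def inner_add_left inner_add_right dot_square_norm power2_eq_square)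
qed

definition radial_pairs :: "real \<Rightarrow> (real \<times> real) set" where
  "radial_pairs \<delta> = {(a, b). a \<ge> 0 \<and> b \<ge> 0 \<and> a\<^sup>2 + b\<^sup>2 \<in> {\<delta>\<^sup>2..1}}"

definition wall_profile :: "real \<Rightarrow> 'a::real_inner \<Rightarrow> 'a \<Rightarrow> real \<times> real \<Rightarrow> 'a \<Rightarrow> real" where
  "wall_profile \<alpha> w z ab y1 = (case ab of (a, b) \<Rightarrow>
     tangent_offset \<alpha> (a\<^sup>2 + b\<^sup>2) + tangent_slope \<alpha> (a\<^sup>2 + b\<^sup>2) * (y1 \<bullet> w + b * norm z))"

lemma tangent_slope_radial_pairs_pos:
  assumes "\<alpha> > -1" "\<delta> > 0" "(a, b) \<in> radial_pairs \<delta>"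
  shows "tangent_slope \<alpha> (a\<^sup>2 + b\<^sup>2) > 0"
proof (rule tangent_slope_pos[OF assms(1)])
  have "0 < \<delta>\<^sup>2" using assms(2) by simp
  also have "\<dots> \<le> a\<^sup>2 + b\<^sup>2" using assms(3) by (simp add: radial_pairs_def)
  finally show "0 < a\<^sup>2 + b\<^sup>2" .
qed

lemma Omega_le_wall_profile:
  assumes "i \<le> N" "\<delta> > 0" "\<alpha> > -1" "w \<in> span (v ` {1..i})"
    and z_orth: "\<And>u. u \<in> span (v ` {1..i}) \<Longrightarrow> z \<bullet> u = 0"
    and "y \<in> Omega v N \<kappa> \<delta>"
  shows "\<exists>ab\<in>radial_pairs \<delta>. \<exists>y1\<in>case_prod (Omega_tilde v i \<kappa>) ab.
    tangent_offset \<alpha> ((norm y)\<^sup>2) + tangent_slope \<alpha> ((norm y)\<^sup>2) * (y \<bullet> (w + z))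
      \<le> wall_profile \<alpha> w z ab y1"
proof -
  obtain y1 y2 where y: "y = y1 + y2"
    and y2: "\<And>u. u \<in> span (v ` {1..i}) \<Longrightarrow> orthogonal y2 u"
    and y1: "y1 \<in> Omega_tilde v i \<kappa> (norm y1) (norm y2)"
    and pyth: "(norm y)\<^sup>2 = (norm y1)\<^sup>2 + (norm y2)\<^sup>2"
    and "(norm y1)\<^sup>2 + (norm y2)\<^sup>2 \<in> {\<delta>\<^sup>2..1}"
    by (rule Omega_orthogonal_decomposition[OF assms(1,2,6)]) blast
  then have I: "(norm y1, norm y2) \<in> radial_pairs \<delta>" by (simp add: radial_pairs_def)
  have "y1 \<bullet> z = 0" "y2 \<bullet> w = 0"
    using y1 z_orth y2[OF assms(4)] by (auto simp: Omega_tilde_def inner_commute orthogonal_def)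
  then have "y \<bullet> (w + z) \<le> y1 \<bullet> w + norm y2 * norm z"
    using norm_cauchy_schwarz[of y2 z] by (simp add: y inner_add_left inner_add_right)
  then have "tangent_offset \<alpha> ((norm y)\<^sup>2) + tangent_slope \<alpha> ((norm y)\<^sup>2) * (y \<bullet> (w + z))
      \<le> wall_profile \<alpha> w z (norm y1, norm y2) y1"
    using tangent_slope_radial_pairs_pos[OF assms(3,2) I] by (simp add: pyth wall_profile_def)
  with I y1 show ?thesis by fastforce
qed

lemma wall_profile_le_Omega:
  assumes "orthonormal_family v N" "\<kappa> > 0" "\<delta> > 0" "w \<in> span (v ` {1..i})"
    and "\<And>u. u \<in> span (v ` {1..i}) \<Longrightarrow> z \<bullet> u = 0" "z \<noteq> 0"
    and "\<And>j. j \<in> {i<..N} \<Longrightarrow> \<bar>v j \<bullet> z\<bar> < \<kappa> * norm z"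
    and ab: "ab \<in> radial_pairs \<delta>" and y1: "y1 \<in> case_prod (Omega_tilde v i \<kappa>) ab"
  shows "\<exists>y\<in>Omega v N \<kappa> \<delta>. wall_profile \<alpha> w z ab y1 \<le>
    tangent_offset \<alpha> ((norm y)\<^sup>2) + tangent_slope \<alpha> ((norm y)\<^sup>2) * (y \<bullet> (w + z))"
proof -
  obtain a b where ab_eq: "ab = (a, b)" by fastforce
  with ab y1 have "b \<ge> 0" "a\<^sup>2 + b\<^sup>2 \<in> {\<delta>\<^sup>2..1}" "y1 \<in> Omega_tilde v i \<kappa> a b"
    by (auto simp: radial_pairs_def)
  note lift = Omega_tilde_lift[OF assms(1-3) this assms(4-7)]
  show ?thesis
    by (rule bexI[OF _ lift(1)]) (simp only: lift(2,3) ab_eq wall_profile_def prod.case order_refl)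
qed

theorem mainTheorem3:
  fixes v :: "nat \<Rightarrow> 'a::euclidean_space"
    and N i :: nat and \<kappa> \<delta> \<alpha> :: real and x w z :: 'a
  assumes "orthonormal_family v N"
    and "\<kappa> > 0" and "0 < \<delta>" and "\<delta> < 1" and "\<alpha> > 0"
    and "i \<le> N"
    and "w \<in> span (v ` {1..i})"
    and "\<forall>u\<in>span (v ` {1..i}). z \<bullet> u = 0"
    and "z \<noteq> 0"
    and "\<forall>j\<in>{i<..N}. \<bar>v j \<bullet> z\<bar> < \<kappa> * norm z"
    and "x = w + z"
  shows "wall v N \<kappa> \<delta> \<alpha> x =
    (SUP ab\<in>{(a, b). a \<ge> 0 \<and> b \<ge> 0 \<and> a\<^sup>2 + b\<^sup>2 \<in> {\<delta>\<^sup>2..1}}.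
       (case ab of (a, b) \<Rightarrow>
          ereal (- 2 * \<alpha> * (a\<^sup>2 + b\<^sup>2) powr ((1 + \<alpha>) / 2))
          + ereal (2 * (1 + \<alpha>) / (a\<^sup>2 + b\<^sup>2) powr ((1 - \<alpha>) / 2))
            * ((SUP y\<in>Omega_tilde v i \<kappa> a b. ereal (y \<bullet> w)) + ereal (b * norm z))))"
  (is "_ = (SUP ab\<in>_. ?T ab)")
proof -
  have \<alpha>: "\<alpha> > -1" using \<open>\<alpha> > 0\<close> by simp
  have "wall v N \<kappa> \<delta> \<alpha> x = (SUP y\<in>Omega v N \<kappa> \<delta>.
      ereal (tangent_offset \<alpha> ((norm y)\<^sup>2) + tangent_slope \<alpha> ((norm y)\<^sup>2) * (y \<bullet> x)))"
    unfolding wall_def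
    by (intro SUP_cong refl) (simp add: hfun_tangent Omega_ne_zero[OF \<open>\<delta> > 0\<close>])
  also have "\<dots> = (SUP ab\<in>radial_pairs \<delta>.
      SUP y1\<in>case_prod (Omega_tilde v i \<kappa>) ab. ereal (wall_profile \<alpha> w z ab y1))"
    using Omega_le_wall_profile[OF assms(6,3) \<alpha> assms(7)] assms(8)
      wall_profile_le_Omega[OF assms(1,2,3,7) _ assms(9)] assms(10)
    unfolding \<open>x = w + z\<close> by (intro SUP_eq_SUP_SUP) auto
  also have "\<dots> = (SUP ab\<in>radial_pairs \<delta>. ?T ab)"
  proof (intro SUP_cong refl)
    fix ab assume ab: "ab \<in> radial_pairs \<delta>"
    obtain a b where ab_eq: "ab = (a, b)" by fastforce
    show "(SUP y1\<in>case_prod (Omega_tilde v i \<kappa>) ab. ereal (wall_profile \<alpha> w z ab y1)) = ?T ab"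
      using SUP_ereal_affine[OF tangent_slope_radial_pairs_pos[OF \<alpha> \<open>\<delta> > 0\<close> ab[unfolded ab_eq]],
          where A = "tangent_offset \<alpha> (a\<^sup>2 + b\<^sup>2)" and g = "\<lambda>y1. y1 \<bullet> w"
          and Y = "Omega_tilde v i \<kappa> a b" and \<beta> = "b * norm z"]
      by (simp only: ab_eq wall_profile_def tangent_offset_def tangent_slope_def prod.case)
  qed
  finally show ?thesis by (simp only: radial_pairs_def)
qed

end
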